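(* For any probability distribution $G$ with $\mathrm{supp}(G)\subseteq[0,K]$ for some $K\ge1$, there exists a universal constant $C>0$ such that $\sum_{y=0}^\infty\sqrt{f_G(y)}\le C\sqrt K$.
   Context: $f_G(y)=\int\frac{\theta^ye^{-\theta}}{y!}G(d\theta)$ for $y\in\{0,1,\dots\}$ (the Poisson mixture pmf). *)

theory Defs
  imports "HOL-Probability.Probability"
begin

definition poisson_mixture :: "real measure \<Rightarrow> nat \<Rightarrow> real" where
  "poisson_mixture G y = (\<integral>\<theta>. \<theta> ^ y * exp (- \<theta>) / fact y \<partial>G)"

end

theory Submission
  imports Defs
begin

text \<open>
  The partial sums of f = f_G are at most 1, and since the mixing variable is at most K,
  f (y + 1) <= K / (y + 1) * f y. From M = ceiling (4 K) on, sqrt f therefore decays at least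
  like 2^(-n), so the tail contributes at most 2, while by Cauchy-Schwarz the first M terms
  contribute at most sqrt M <= sqrt (5 K).
\<close>

lemma sum_sqrt_le_sqrt_card_mult_sum:
  fixes f :: "'a \<Rightarrow> real"
  assumes "\<And>i. i \<in> A \<Longrightarrow> 0 \<le> f i"
  shows "(\<Sum>i\<in>A. sqrt (f i)) \<le> sqrt (card A * (\<Sum>i\<in>A. f i))"
proof (rule real_le_rsqrt)
  have "(\<Sum>i\<in>A. sqrt (f i) * 1)\<^sup>2 \<le> (\<Sum>i\<in>A. (sqrt (f i))\<^sup>2) * (\<Sum>i\<in>A. 1\<^sup>2)"
    by (rule Cauchy_Schwarz_ineq_sum)
  also have "\<dots> = card A * (\<Sum>i\<in>A. f i)"
    using assms by simp
  finally show "(\<Sum>i\<in>A. sqrt (f i))\<^sup>2 \<le> card A * (\<Sum>i\<in>A. f i)"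
    by simp
qed

lemma ratio_bounded_summable_suminf_le:
  fixes b :: "nat \<Rightarrow> real"
  assumes nonneg: "\<And>n. 0 \<le> b n" and r: "0 \<le> r" "r < 1"
    and ratio: "\<And>n. b (Suc n) \<le> r * b n"
  shows "summable b \<and> (\<Sum>n. b n) \<le> b 0 / (1 - r)"
proof -
  have geometric: "b n \<le> b 0 * r ^ n" for n
  proof (induction n)
    case (Suc n)
    have "b (Suc n) \<le> r * b n" by (fact ratio)
    also have "\<dots> \<le> r * (b 0 * r ^ n)" using Suc r by (intro mult_left_mono)
    finally show ?case by (simp add: ac_simps)
  qed simp
  have "summable (\<lambda>n. b 0 * r ^ n)"
    using r by (intro summable_mult summable_geometric) simp
  moreover from this have "summable b"
    by (rule summable_comparison_test[rotated]) (use nonneg geometric in auto)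
  ultimately have "(\<Sum>n. b n) \<le> (\<Sum>n. b 0 * r ^ n)"
    by (intro suminf_le geometric)
  also have "\<dots> = b 0 / (1 - r)"
    using r by (simp add: suminf_mult suminf_geometric)
  finally show ?thesis using \<open>summable b\<close> by simp
qed

lemma summable_sqrt_of_ratio_bounded:
  fixes f :: "nat \<Rightarrow> real"
  assumes K: "1 \<le> K" and nonneg: "\<And>y. 0 \<le> f y" and partial_sums: "\<And>N. (\<Sum>y<N. f y) \<le> 1"
    and ratio: "\<And>y. f (Suc y) \<le> K / Suc y * f y"
  shows "summable (\<lambda>y. sqrt (f y)) \<and> (\<Sum>y. sqrt (f y)) \<le> 5 * sqrt K"
proof -
  define M where "M = nat \<lceil>4 * K\<rceil>"
  have tail_ratio: "sqrt (f (Suc n + M)) \<le> 1/2 * sqrt (f (n + M))" for n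
  proof -
    have "4 * K \<le> Suc (n + M)"
      unfolding M_def by linarith
    then have "K / Suc (n + M) \<le> 1/4"
      by (simp add: divide_simps)
    then have "f (Suc (n + M)) \<le> 1/4 * f (n + M)"
      using ratio[of "n + M"] mult_right_mono[OF _ nonneg] by (blast intro: order_trans)
    then have "sqrt (f (Suc n + M)) \<le> sqrt (1/4 * f (n + M))"
      by simp
    also have "\<dots> = 1/2 * sqrt (f (n + M))"
      by (simp add: real_sqrt_mult real_sqrt_divide)
    finally show ?thesis .
  qed
  have "f M \<le> (\<Sum>y<Suc M. f y)"
    by (rule member_le_sum) (use nonneg in auto)
  also have "\<dots> \<le> 1"
    by (fact partial_sums)
  finally have "sqrt (f M) \<le> 1"
    by simp
  have tail: "summable (\<lambda>n. sqrt (f (n + M))) \<and> (\<Sum>n. sqrt (f (n + M))) \<le> 2 * sqrt (f M)"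
    using ratio_bounded_summable_suminf_le[of "\<lambda>n. sqrt (f (n + M))" "1/2"] nonneg tail_ratio
    by simp
  then have summable: "summable (\<lambda>y. sqrt (f y))"
    using summable_iff_shift[of "\<lambda>y. sqrt (f y)" M] by simp
  have "(\<Sum>y<M. sqrt (f y)) \<le> sqrt (card {..<M} * (\<Sum>y<M. f y))"
    using nonneg by (rule sum_sqrt_le_sqrt_card_mult_sum)
  also have "\<dots> \<le> sqrt (5 * K)"
  proof (rule real_sqrt_le_mono)
    have "real M \<le> 5 * K"
      unfolding M_def using K by linarith
    then show "card {..<M} * (\<Sum>y<M. f y) \<le> 5 * K"
      using partial_sums[of M] mult_left_le[of "\<Sum>y<M. f y" "real M"] by simp
  qed
  also have "\<dots> = sqrt 5 * sqrt K"
    by (rule real_sqrt_mult)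
  also have "\<dots> \<le> 3 * sqrt K"
    using K by (intro mult_right_mono real_le_lsqrt) auto
  finally have head: "(\<Sum>y<M. sqrt (f y)) \<le> 3 * sqrt K" .
  have "(\<Sum>y. sqrt (f y)) = (\<Sum>n. sqrt (f (n + M))) + (\<Sum>y<M. sqrt (f y))"
    by (rule suminf_split_initial_segment[OF summable])
  also have "\<dots> \<le> 2 + 3 * sqrt K"
    using tail head \<open>sqrt (f M) \<le> 1\<close> by linarith
  also have "\<dots> \<le> 5 * sqrt K"
    using K by simp
  finally show ?thesis
    using summable by simp
qed

lemma sum_poisson_terms_le_1:
  fixes \<theta> :: real
  assumes "0 \<le> \<theta>"
  shows "(\<Sum>y<N. \<theta> ^ y * exp (- \<theta>) / fact y) \<le> 1"
proof -
  have "(\<Sum>y<N. \<theta> ^ y / fact y) \<le> (\<Sum>y. \<theta> ^ y / fact y)"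
    using assms summable_exp_generic[of \<theta>]
    by (intro sum_le_suminf) (auto simp: divide_inverse ac_simps)
  also have "\<dots> = exp \<theta>"
    by (simp add: exp_def divide_inverse ac_simps)
  finally have "exp (- \<theta>) * (\<Sum>y<N. \<theta> ^ y / fact y) \<le> exp (- \<theta>) * exp \<theta>"
    by simp
  then show ?thesis
    by (simp add: sum_distrib_left exp_minus ac_simps)
qed

locale poisson_mixing = prob_space G for G :: "real measure" +
  assumes sets_eq_borel: "sets G = sets borel"
    and AE_nonneg: "AE \<theta> in G. 0 \<le> \<theta>"
begin

lemma integrable_poisson_term: "integrable G (\<lambda>\<theta>. \<theta> ^ y * exp (- \<theta>) / fact y)"
proof (rule integrable_const_bound[where B = 1])
  show "(\<lambda>\<theta>. \<theta> ^ y * exp (- \<theta>) / fact y) \<in> borel_measurable G"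
    unfolding measurable_cong_sets[OF sets_eq_borel refl]
    by (auto intro!: borel_measurable_continuous_onI continuous_intros)
  have bound: "norm (\<theta> ^ y * exp (- \<theta>) / fact y) \<le> 1" if "0 \<le> \<theta>" for \<theta> :: real
  proof -
    have "\<theta> ^ y * exp (- \<theta>) / fact y \<le> (\<Sum>n<Suc y. \<theta> ^ n * exp (- \<theta>) / fact n)"
      using that by (intro member_le_sum) auto
    also have "\<dots> \<le> 1"
      using that by (rule sum_poisson_terms_le_1)
    finally show ?thesis
      using that by (simp add: abs_of_nonneg)
  qed
  show "AE \<theta> in G. norm (\<theta> ^ y * exp (- \<theta>) / fact y) \<le> 1"
    using AE_nonneg by eventually_elim (rule bound)
qed

lemma poisson_mixture_nonneg: "0 \<le> poisson_mixture G y"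
  unfolding poisson_mixture_def using AE_nonneg by (intro integral_nonneg_AE) auto

lemma sum_poisson_mixture_le_1: "(\<Sum>y<N. poisson_mixture G y) \<le> 1"
proof -
  have "(\<Sum>y<N. poisson_mixture G y) = (\<integral>\<theta>. (\<Sum>y<N. \<theta> ^ y * exp (- \<theta>) / fact y) \<partial>G)"
    unfolding poisson_mixture_def by (simp add: integrable_poisson_term)
  also have "\<dots> \<le> 1"
    using AE_nonneg by (intro integral_le_const) (auto simp: integrable_poisson_term sum_poisson_terms_le_1)
  finally show ?thesis .
qed

lemma poisson_mixture_Suc_le:
  assumes "AE \<theta> in G. \<theta> \<le> K"
  shows "poisson_mixture G (Suc y) \<le> K / Suc y * poisson_mixture G y"
proof -
  have "\<theta> ^ Suc y * exp (- \<theta>) / fact (Suc y) \<le> K / Suc y * (\<theta> ^ y * exp (- \<theta>) / fact y)"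
    if "0 \<le> \<theta>" "\<theta> \<le> K" for \<theta> :: real
  proof -
    have "\<theta> ^ Suc y * exp (- \<theta>) / fact (Suc y) = \<theta> / Suc y * (\<theta> ^ y * exp (- \<theta>) / fact y)"
      by (simp add: field_simps)
    also have "\<dots> \<le> K / Suc y * (\<theta> ^ y * exp (- \<theta>) / fact y)"
      using that by (intro mult_right_mono divide_right_mono) auto
    finally show ?thesis .
  qed
  then have "poisson_mixture G (Suc y) \<le> (\<integral>\<theta>. K / Suc y * (\<theta> ^ y * exp (- \<theta>) / fact y) \<partial>G)"
    unfolding poisson_mixture_def using AE_nonneg assms
    by (intro integral_mono_AE integrable_poisson_term integrable_mult_right) auto
  then show ?thesis
    by (simp add: poisson_mixture_def)
qed

lemma summable_sqrt_poisson_mixture: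
  assumes "1 \<le> K" "AE \<theta> in G. \<theta> \<le> K"
  shows "summable (\<lambda>y. sqrt (poisson_mixture G y)) \<and> (\<Sum>y. sqrt (poisson_mixture G y)) \<le> 5 * sqrt K"
  using assms
  by (intro summable_sqrt_of_ratio_bounded poisson_mixture_nonneg sum_poisson_mixture_le_1
      poisson_mixture_Suc_le)

end

theorem lemma7:
  shows "\<exists>C>0. \<forall>K::real. \<forall>G::real measure.
           K \<ge> 1 \<longrightarrow> prob_space G \<longrightarrow> sets G = sets borel \<longrightarrow>
           measure G {0..K} = 1 \<longrightarrow>
             summable (\<lambda>y. sqrt (poisson_mixture G y)) \<and>
             (\<Sum>y. sqrt (poisson_mixture G y)) \<le> C * sqrt K"
proof -
  have "summable (\<lambda>y. sqrt (poisson_mixture G y)) \<and> (\<Sum>y. sqrt (poisson_mixture G y)) \<le> 5 * sqrt K"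
    if K: "K \<ge> 1" and G: "prob_space G" "sets G = sets borel" "measure G {0..K} = 1"
    for K :: real and G :: "real measure"
  proof -
    interpret prob_space G
      by (fact G)
    have support: "AE \<theta> in G. \<theta> \<in> {0..K}"
      using G by (intro AE_prob_1) simp
    interpret poisson_mixing G
      using G support by unfold_locales auto
    show ?thesis
      using K support by (intro summable_sqrt_poisson_mixture) auto
  qed
  then show ?thesis
    by (intro exI[of _ "5::real"]) simp
qed

end
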